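(* Let $\mathfrak{A}$ be a $\sigma$-algebra (abstract, i.e. a $\sigma$-complete Boolean algebra) and let $\mathcal{S}_b(\mathbb{C},\mathfrak{A})$ be the set of all bounded complex spectral families in $\mathfrak{A}$. Then the map $f_\ast:\mathcal{S}_b(\mathbb{C},\mathfrak{A})\to C(\mathcal{Q}(\mathfrak{A}))$, $E\mapsto f_E$, is a bijection; consequently $\mathcal{S}_b(\mathbb{C},\mathfrak{A})$, equipped with the operations transported by $f_\ast$ (i.e. $E+F:=f_\ast^{-1}(f_E+f_F)$, $EF:=f_\ast^{-1}(f_Ef_F)$, $\alpha E:=f_\ast^{-1}(\alpha f_E)$, $E^\ast:=f_\ast^{-1}(\overline{f_E})$, $|E|:=\|f_E\|_\infty$), is an abelian $C^\ast$-algebra $\ast$-isomorphic to $C(\mathcal{Q}(\mathfrak{A}))$.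
   Context: Infima/suprema over real index sets in $\mathfrak{A}$ are computed along countable dense sets. A complex spectral family in $\mathfrak{A}$ is a map $E:\mathbb{R}^2\to\mathfrak{A}$ with (i) $E_{\lambda_1,\lambda_2}\wedge E_{\mu_1,\mu_2}=E_{\min\{\lambda_1,\mu_1\},\min\{\lambda_2,\mu_2\}}$; (ii) $\bigwedge_{\lambda_1<\mu_1,\lambda_2<\mu_2}E_{\mu_1,\mu_2}=E_{\lambda_1,\lambda_2}$; (iii) $\bigwedge_\lambda E_{\lambda,\lambda_2}=0=\bigwedge_\lambda E_{\lambda_1,\lambda}$ and $\bigvee_{\lambda_1,\lambda_2}E_{\lambda_1,\lambda_2}=1$; bounded means there are $m,b$ with $E=0$ whenever some coordinate is $\le m$ and $E=1$ when both coordinates are $\ge b$. The Stone spectrum $\mathcal{Q}(\mathfrak{A})$ is the set of maximal dual ideals (maximal nonempty upward closed subsets not containing $0$, closed under finite meets) with the topology generated by $\{\mathfrak{B}\mid a\in\mathfrak{B}\}$, $a\in\mathfrak{A}$. For such $E$, $f_E=f_{E,1}+if_{E,2}$ where $f_{E,1}(\mathfrak{B})=\inf\{\lambda\mid\exists\mu:E_{\lambda,\mu}\in\mathfrak{B}\}$ and $f_{E,2}(\mathfrak{B})=\inf\{\mu\mid\exists\lambda:E_{\lambda,\mu}\in\mathfrak{B}\}$. *)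

theory Defs
  imports "HOL-Analysis.Analysis"
begin

text \<open>Abstract sigma-algebra: a Boolean algebra in which every countable subset has a
  greatest lower bound (hence, by complementation, also a least upper bound).\<close>

definition is_glb :: "'a::boolean_algebra \<Rightarrow> 'a set \<Rightarrow> bool" where
  "is_glb x S \<longleftrightarrow> (\<forall>s\<in>S. x \<le> s) \<and> (\<forall>y. (\<forall>s\<in>S. y \<le> s) \<longrightarrow> y \<le> x)"

definition is_lub :: "'a::boolean_algebra \<Rightarrow> 'a set \<Rightarrow> bool" where
  "is_lub x S \<longleftrightarrow> (\<forall>s\<in>S. s \<le> x) \<and> (\<forall>y. (\<forall>s\<in>S. s \<le> y) \<longrightarrow> x \<le> y)"

definition sigma_complete :: "'a::boolean_algebra itself \<Rightarrow> bool" where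
  "sigma_complete _ \<longleftrightarrow> (\<forall>S::'a set. countable S \<longrightarrow> (\<exists>x. is_glb x S))"

text \<open>Complex spectral family; infima/suprema over real index sets are taken along
  the countable dense set of rationals.\<close>

definition complex_spectral_family :: "(real \<Rightarrow> real \<Rightarrow> 'a::boolean_algebra) \<Rightarrow> bool" where
  "complex_spectral_family E \<longleftrightarrow>
     (\<forall>l1 l2 m1 m2. inf (E l1 l2) (E m1 m2) = E (min l1 m1) (min l2 m2)) \<and>
     (\<forall>l1 l2. is_glb (E l1 l2)
        {E m1 m2 | m1 m2. m1 \<in> \<rat> \<and> m2 \<in> \<rat> \<and> l1 < m1 \<and> l2 < m2}) \<and>
     (\<forall>l2. is_glb bot {E l l2 | l. l \<in> \<rat>}) \<and>
     (\<forall>l1. is_glb bot {E l1 l | l. l \<in> \<rat>}) \<and>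
     is_lub top {E l1 l2 | l1 l2. l1 \<in> \<rat> \<and> l2 \<in> \<rat>}"

definition bounded_csf :: "(real \<Rightarrow> real \<Rightarrow> 'a::boolean_algebra) \<Rightarrow> bool" where
  "bounded_csf E \<longleftrightarrow> complex_spectral_family E \<and>
     (\<exists>m b. (\<forall>l1 l2. (l1 \<le> m \<or> l2 \<le> m) \<longrightarrow> E l1 l2 = bot) \<and>
            (\<forall>l1 l2. (b \<le> l1 \<and> b \<le> l2) \<longrightarrow> E l1 l2 = top))"

definition S_b :: "(real \<Rightarrow> real \<Rightarrow> 'a::boolean_algebra) set" where
  "S_b = {E. bounded_csf E}"

definition dual_ideal :: "'a::boolean_algebra set \<Rightarrow> bool" where
  "dual_ideal B \<longleftrightarrow> B \<noteq> {} \<and> bot \<notin> B \<and>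
     (\<forall>a b. a \<in> B \<and> a \<le> b \<longrightarrow> b \<in> B) \<and>
     (\<forall>a b. a \<in> B \<and> b \<in> B \<longrightarrow> inf a b \<in> B)"

definition stone_spectrum :: "'a::boolean_algebra set set" where
  "stone_spectrum = {B. dual_ideal B \<and> (\<forall>C. dual_ideal C \<and> B \<subseteq> C \<longrightarrow> C = B)}"

definition stone_topology :: "'a::boolean_algebra set topology" where
  "stone_topology = topology_generated_by {{B \<in> stone_spectrum. a \<in> B} | a. True}"

definition C_Q :: "('a::boolean_algebra set \<Rightarrow> complex) set" where
  "C_Q = {f. continuous_map stone_topology euclidean f \<and>
             (\<forall>B. B \<notin> stone_spectrum \<longrightarrow> f B = 0)}"

definition f_E1 :: "(real \<Rightarrow> real \<Rightarrow> 'a::boolean_algebra) \<Rightarrow> 'a set \<Rightarrow> real" where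
  "f_E1 E B = Inf {l. \<exists>m. E l m \<in> B}"

definition f_E2 :: "(real \<Rightarrow> real \<Rightarrow> 'a::boolean_algebra) \<Rightarrow> 'a set \<Rightarrow> real" where
  "f_E2 E B = Inf {m. \<exists>l. E l m \<in> B}"

definition f_E :: "(real \<Rightarrow> real \<Rightarrow> 'a::boolean_algebra) \<Rightarrow> 'a set \<Rightarrow> complex" where
  "f_E E B = (if B \<in> stone_spectrum
              then Complex (f_E1 E B) (f_E2 E B) else 0)"

end

theory Submission
  imports Defs
begin

(* For an ultrafilter B, the value f_E(B) is determined by which E_{l1,l2} lie in B:
   E_{l1,l2} in B forces f_E(B) <= (l1,l2) componentwise, and f_E(B) < (l1,l2) forces
   E_{l1,l2} in B.  This makes f_E continuous on the Stone space, whose topology has the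
   clopen sets Q_a = {B. a in B} as a base, and it determines E from f_E, because
   E_{l1,l2} is the meet of the E_{m1,m2} with rational m > l.
   Conversely, for continuous f the only candidate for E_{l1,l2} is the largest a with
   Q_a inside the closed sublevel set {Re f <= l1, Im f <= l2}.  It exists by
   sigma-completeness: the open set {Re f < m1, Im f < m2} is a countable union of compact
   sets, each covered by a clopen Q_c inside it, and the supremum of these c lies between
   the open set and its closure; E_{l1,l2} is the infimum of these suprema over rational
   m > l. *)

abbreviation stone_clopen :: "'a::boolean_algebra \<Rightarrow> 'a set set" where
  "stone_clopen a \<equiv> {B \<in> stone_spectrum. a \<in> B}"

section \<open>Ultrafilters of a Boolean algebra\<close>

lemma dual_ideal_top: "dual_ideal B \<Longrightarrow> top \<in> B"
  unfolding dual_ideal_def by auto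

lemma dual_ideal_upward: "dual_ideal B \<Longrightarrow> a \<in> B \<Longrightarrow> a \<le> b \<Longrightarrow> b \<in> B"
  unfolding dual_ideal_def by auto

lemma dual_ideal_inf_iff: "dual_ideal B \<Longrightarrow> inf a b \<in> B \<longleftrightarrow> a \<in> B \<and> b \<in> B"
  unfolding dual_ideal_def by (metis inf.cobounded1 inf.cobounded2)

lemma dual_ideal_bot: "dual_ideal B \<Longrightarrow> bot \<notin> B"
  unfolding dual_ideal_def by auto

lemma dual_ideal_extends_to_stone_spectrum:
  assumes "dual_ideal F"
  shows "\<exists>B\<in>stone_spectrum. F \<subseteq> B"
proof -
  let ?A = "{C. dual_ideal C \<and> F \<subseteq> C}"
  have "\<exists>M\<in>?A. \<forall>X\<in>?A. M \<subseteq> X \<longrightarrow> X = M"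
  proof (rule subset_Zorn_nonempty)
    show "?A \<noteq> {}" using assms by blast
  next
    fix \<C> assume ne: "\<C> \<noteq> {}" and chain: "subset.chain ?A \<C>"
    then have sub: "\<C> \<subseteq> ?A" and total: "\<forall>X\<in>\<C>. \<forall>Y\<in>\<C>. X \<subseteq> Y \<or> Y \<subseteq> X"
      unfolding subset.chain_def by blast+
    have "dual_ideal (\<Union>\<C>)"
      unfolding dual_ideal_def
    proof (intro conjI allI impI)
      show "\<Union>\<C> \<noteq> {}" using ne sub unfolding dual_ideal_def by blast
      show "bot \<notin> \<Union>\<C>" using sub unfolding dual_ideal_def by blast
      show "b \<in> \<Union>\<C>" if "a \<in> \<Union>\<C> \<and> a \<le> b" for a b
        using that sub unfolding dual_ideal_def by blast
      show "inf a b \<in> \<Union>\<C>" if ab: "a \<in> \<Union>\<C> \<and> b \<in> \<Union>\<C>" for a b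
      proof -
        obtain X Y where XY: "X \<in> \<C>" "Y \<in> \<C>" "a \<in> X" "b \<in> Y" using ab by blast
        with total have "X \<subseteq> Y \<or> Y \<subseteq> X" by blast
        with XY sub show ?thesis unfolding dual_ideal_def by blast
      qed
    qed
    moreover have "F \<subseteq> \<Union>\<C>" using ne sub by blast
    ultimately show "\<Union>\<C> \<in> ?A" by blast
  qed
  then obtain M where "dual_ideal M" "F \<subseteq> M" "\<forall>X. dual_ideal X \<and> F \<subseteq> X \<longrightarrow> M \<subseteq> X \<longrightarrow> X = M"
    by auto
  then show ?thesis unfolding stone_spectrum_def by blast
qed

lemma stone_spectrum_dual_ideal: "B \<in> stone_spectrum \<Longrightarrow> dual_ideal B"
  unfolding stone_spectrum_def by auto

lemma stone_spectrum_top: "B \<in> stone_spectrum \<Longrightarrow> top \<in> B"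
  by (rule dual_ideal_top[OF stone_spectrum_dual_ideal])

lemma stone_spectrum_bot: "B \<in> stone_spectrum \<Longrightarrow> bot \<notin> B"
  by (rule dual_ideal_bot[OF stone_spectrum_dual_ideal])

lemma stone_spectrum_upward: "B \<in> stone_spectrum \<Longrightarrow> a \<in> B \<Longrightarrow> a \<le> b \<Longrightarrow> b \<in> B"
  by (rule dual_ideal_upward[OF stone_spectrum_dual_ideal])

lemma stone_spectrum_inf_iff: "B \<in> stone_spectrum \<Longrightarrow> inf a b \<in> B \<longleftrightarrow> a \<in> B \<and> b \<in> B"
  by (rule dual_ideal_inf_iff[OF stone_spectrum_dual_ideal])

lemma stone_spectrum_maximal: "B \<in> stone_spectrum \<Longrightarrow> dual_ideal C \<Longrightarrow> B \<subseteq> C \<Longrightarrow> C = B"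
  unfolding stone_spectrum_def by blast

lemma stone_spectrum_compl_iff:
  assumes B: "B \<in> stone_spectrum"
  shows "- a \<in> B \<longleftrightarrow> a \<notin> B"
proof
  assume "- a \<in> B"
  then show "a \<notin> B" using stone_spectrum_bot[OF B] stone_spectrum_inf_iff[OF B, of a "- a"] by auto
next
  assume a: "a \<notin> B"
  have dB: "dual_ideal B" using B by (rule stone_spectrum_dual_ideal)
  let ?C = "{x. \<exists>b\<in>B. inf b a \<le> x}"
  show "- a \<in> B"
  proof (cases "bot \<in> ?C")
    case True
    then obtain b where b: "b \<in> B" "inf b a \<le> bot" by blast
    then have "b \<le> - a" by (simp add: bot_unique inf_shunt)
    with dB b(1) show ?thesis by (rule dual_ideal_upward)
  next
    case False
    \<comment> \<open>Otherwise the filter generated by B and a is proper, and maximality puts a into B.\<close>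
    have "dual_ideal ?C"
      unfolding dual_ideal_def
    proof (intro conjI allI impI)
      show "?C \<noteq> {}" using dual_ideal_top[OF dB] order_refl by blast
      show "bot \<notin> ?C" using False .
      show "y \<in> ?C" if "x \<in> ?C \<and> x \<le> y" for x y using that order_trans by blast
      show "inf x y \<in> ?C" if xy: "x \<in> ?C \<and> y \<in> ?C" for x y
      proof -
        obtain b c where bc: "b \<in> B" "c \<in> B" "inf b a \<le> x" "inf c a \<le> y" using xy by blast
        have "inf b c \<in> B" using dB bc(1,2) dual_ideal_inf_iff by blast
        moreover have "inf (inf b c) a \<le> inf x y"
        proof -
          have "inf (inf b c) a \<le> inf b a" "inf (inf b c) a \<le> inf c a"
            by (auto intro: le_infI1 inf_mono)
          with bc(3,4) show ?thesis by (meson le_infI order_trans)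
        qed
        ultimately show ?thesis by blast
      qed
    qed
    moreover have "B \<subseteq> ?C"
    proof
      fix x assume "x \<in> B"
      then show "x \<in> ?C" using inf_le1[of x a] by blast
    qed
    ultimately have "?C = B" by (rule stone_spectrum_maximal[OF B])
    moreover have "a \<in> ?C" using dual_ideal_top[OF dB] by (intro CollectI bexI[of _ top]) simp_all
    ultimately show ?thesis using a by blast
  qed
qed

lemma stone_spectrum_exists: "a \<noteq> bot \<Longrightarrow> \<exists>B\<in>stone_spectrum. a \<in> B"
proof -
  assume "a \<noteq> bot"
  then have "dual_ideal {x. a \<le> x}"
    unfolding dual_ideal_def by (auto simp: bot_unique)
  then show ?thesis using dual_ideal_extends_to_stone_spectrum by blast
qed

lemma stone_clopen_subset_iff: "stone_clopen a \<subseteq> stone_clopen c \<longleftrightarrow> a \<le> c"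
proof
  assume sub: "stone_clopen a \<subseteq> stone_clopen c"
  show "a \<le> c"
  proof (rule ccontr)
    assume "\<not> a \<le> c"
    then have "inf a (- c) \<noteq> bot" by (simp add: inf_shunt)
    then obtain B where "B \<in> stone_spectrum" "inf a (- c) \<in> B" using stone_spectrum_exists by blast
    then show False using sub by (auto simp: stone_spectrum_inf_iff stone_spectrum_compl_iff)
  qed
qed (auto intro: stone_spectrum_upward)

lemma stone_clopen_bot: "stone_clopen bot = {}"
  using stone_spectrum_bot by blast

lemma stone_clopen_top: "stone_clopen top = stone_spectrum"
  using stone_spectrum_top by blast

lemma stone_clopen_inf: "stone_clopen (inf a b) = stone_clopen a \<inter> stone_clopen b"
  using stone_spectrum_inf_iff by blast

lemma stone_clopen_compl: "stone_clopen (- a) = stone_spectrum - stone_clopen a"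
  using stone_spectrum_compl_iff by blast

lemma stone_spectrum_sup_iff:
  assumes B: "B \<in> stone_spectrum"
  shows "sup a b \<in> B \<longleftrightarrow> a \<in> B \<or> b \<in> B"
  using stone_spectrum_compl_iff[OF B, of "sup a b"] stone_spectrum_inf_iff[OF B, of "- a" "- b"]
    stone_spectrum_compl_iff[OF B, of a] stone_spectrum_compl_iff[OF B, of b]
  by auto

lemma stone_clopen_sup: "stone_clopen (sup a b) = stone_clopen a \<union> stone_clopen b"
  using stone_spectrum_sup_iff by blast

section \<open>The Stone topology\<close>

lemma topspace_stone_topology: "topspace stone_topology = stone_spectrum"
proof -
  have "\<Union>{stone_clopen a | a. True} = stone_spectrum"
    using stone_clopen_top by blast
  then show ?thesis unfolding stone_topology_def topology_generated_by_topspace .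
qed

lemma openin_stone_clopen: "openin stone_topology (stone_clopen a)"
  unfolding stone_topology_def by (rule topology_generated_by_Basis) blast

lemma openin_stone_topology_iff:
  "openin stone_topology U \<longleftrightarrow> U \<subseteq> stone_spectrum \<and> (\<forall>B\<in>U. \<exists>a\<in>B. stone_clopen a \<subseteq> U)"
proof
  assume "openin stone_topology U"
  then have "generate_topology_on {stone_clopen a | a. True} U"
    unfolding stone_topology_def by (rule openin_topology_generated_by)
  then show "U \<subseteq> stone_spectrum \<and> (\<forall>B\<in>U. \<exists>a\<in>B. stone_clopen a \<subseteq> U)"
  proof induction
    case Empty
    show ?case by simp
  next
    case (Int U V)
    have "\<exists>c\<in>B. stone_clopen c \<subseteq> U \<inter> V" if B: "B \<in> U \<inter> V" for B
    proof -
      obtain a where a: "a \<in> B" "stone_clopen a \<subseteq> U"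
        using Int.IH(1) B by (meson IntD1)
      obtain b where b: "b \<in> B" "stone_clopen b \<subseteq> V"
        using Int.IH(2) B by (meson IntD2)
      have "B \<in> stone_spectrum" using Int.IH(1) B by auto
      then have "inf a b \<in> B" using a(1) b(1) by (simp add: stone_spectrum_inf_iff)
      moreover have "stone_clopen (inf a b) \<subseteq> U \<inter> V"
        unfolding stone_clopen_inf using a(2) b(2) by (rule Int_mono)
      ultimately show ?thesis ..
    qed
    then show ?case using Int.IH(1) by auto
  next
    case (UN K)
    show ?case
    proof (intro conjI ballI)
      show "\<Union>K \<subseteq> stone_spectrum" using UN.IH by auto
      fix B assume "B \<in> \<Union>K"
      then obtain k where "k \<in> K" "B \<in> k" by auto
      then obtain a where "a \<in> B" "stone_clopen a \<subseteq> k" using UN.IH by meson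
      with \<open>k \<in> K\<close> show "\<exists>a\<in>B. stone_clopen a \<subseteq> \<Union>K" by auto
    qed
  next
    case (Basis s)
    then obtain a where s: "s = stone_clopen a" by auto
    show ?case unfolding s by (intro conjI ballI bexI[of _ a]) auto
  qed
next
  assume U: "U \<subseteq> stone_spectrum \<and> (\<forall>B\<in>U. \<exists>a\<in>B. stone_clopen a \<subseteq> U)"
  have "U = (\<Union>a\<in>{a. stone_clopen a \<subseteq> U}. stone_clopen a)"
  proof (intro equalityI subsetI)
    fix B assume "B \<in> U"
    with U obtain a where "a \<in> B" "stone_clopen a \<subseteq> U" by auto
    with \<open>B \<in> U\<close> U show "B \<in> (\<Union>a\<in>{a. stone_clopen a \<subseteq> U}. stone_clopen a)"
      by (intro UN_I[of a]) auto
  qed auto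
  moreover have "openin stone_topology (\<Union>a\<in>{a. stone_clopen a \<subseteq> U}. stone_clopen a)"
    by (rule openin_Union) (auto intro: openin_stone_clopen)
  ultimately show "openin stone_topology U" by simp
qed

lemma dual_ideal_of_no_finite_subcover:
  assumes no_subcover: "\<And>D. finite D \<Longrightarrow> D \<subseteq> A \<Longrightarrow> \<not> stone_spectrum \<subseteq> (\<Union>a\<in>D. stone_clopen a)"
  shows "dual_ideal {x. \<exists>D. finite D \<and> D \<subseteq> A \<and> stone_spectrum - (\<Union>a\<in>D. stone_clopen a) \<subseteq> stone_clopen x}"
    (is "dual_ideal ?F")
  unfolding dual_ideal_def
proof (intro conjI allI impI)
  have "top \<in> ?F" by (intro CollectI exI[of _ "{}"]) (auto simp: stone_spectrum_top)
  then show "?F \<noteq> {}" by auto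
  show "bot \<notin> ?F"
  proof
    assume "bot \<in> ?F"
    then obtain D where D: "finite D" "D \<subseteq> A"
      "stone_spectrum - (\<Union>a\<in>D. stone_clopen a) \<subseteq> stone_clopen bot"
      unfolding mem_Collect_eq by blast
    then have "stone_spectrum \<subseteq> (\<Union>a\<in>D. stone_clopen a)" unfolding stone_clopen_bot by auto
    with D no_subcover show False by auto
  qed
  show "b \<in> ?F" if ab: "a \<in> ?F \<and> a \<le> b" for a b
  proof -
    obtain D where "finite D" "D \<subseteq> A" "stone_spectrum - (\<Union>a\<in>D. stone_clopen a) \<subseteq> stone_clopen a"
      using ab by auto
    moreover have "stone_clopen a \<subseteq> stone_clopen b" using ab by (simp only: stone_clopen_subset_iff)
    ultimately show ?thesis by (intro CollectI exI[of _ D]) auto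
  qed
  show "inf a b \<in> ?F" if ab: "a \<in> ?F \<and> b \<in> ?F" for a b
  proof -
    obtain D1 where D1: "finite D1" "D1 \<subseteq> A"
      "stone_spectrum - (\<Union>d\<in>D1. stone_clopen d) \<subseteq> stone_clopen a"
      using ab by auto
    obtain D2 where D2: "finite D2" "D2 \<subseteq> A"
      "stone_spectrum - (\<Union>d\<in>D2. stone_clopen d) \<subseteq> stone_clopen b"
      using ab by auto
    have "stone_spectrum - (\<Union>d\<in>D1 \<union> D2. stone_clopen d) \<subseteq> stone_spectrum - (\<Union>d\<in>D1. stone_clopen d)"
      "stone_spectrum - (\<Union>d\<in>D1 \<union> D2. stone_clopen d) \<subseteq> stone_spectrum - (\<Union>d\<in>D2. stone_clopen d)"
      by auto
    with D1(3) D2(3) have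
      "stone_spectrum - (\<Union>d\<in>D1 \<union> D2. stone_clopen d) \<subseteq> stone_clopen a \<inter> stone_clopen b"
      by (meson Int_greatest subset_trans)
    with D1(1,2) D2(1,2) show ?thesis unfolding stone_clopen_inf[symmetric]
      by (intro CollectI exI[of _ "D1 \<union> D2"]) auto
  qed
qed

lemma stone_clopen_cover_finite_subcover:
  assumes cover: "stone_spectrum \<subseteq> (\<Union>a\<in>A. stone_clopen a)"
  shows "\<exists>D. finite D \<and> D \<subseteq> A \<and> stone_spectrum \<subseteq> (\<Union>a\<in>D. stone_clopen a)"
proof (rule ccontr)
  let ?F = "{x. \<exists>D. finite D \<and> D \<subseteq> A \<and> stone_spectrum - (\<Union>a\<in>D. stone_clopen a) \<subseteq> stone_clopen x}"
  assume "\<not> ?thesis"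
  then have "dual_ideal ?F" by (intro dual_ideal_of_no_finite_subcover) blast
  then have "\<exists>B\<in>stone_spectrum. ?F \<subseteq> B" by (rule dual_ideal_extends_to_stone_spectrum)
  then obtain B where B: "B \<in> stone_spectrum" "?F \<subseteq> B" ..
  from B(1) cover obtain a where "a \<in> A" "a \<in> B" by auto
  have "- a \<in> ?F"
    using \<open>a \<in> A\<close> by (intro CollectI exI[of _ "{a}"]) (auto simp: stone_spectrum_compl_iff)
  with B(2) have "- a \<in> B" by (rule subsetD)
  with \<open>a \<in> B\<close> show False using stone_spectrum_compl_iff[OF B(1)] by blast
qed

lemma compact_space_stone_topology: "compact_space (stone_topology :: 'a::boolean_algebra set topology)"
  unfolding compact_space_alt topspace_stone_topology
proof (intro allI impI)
  fix \<U> :: "'a set set set"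
  assume "(\<forall>U\<in>\<U>. openin stone_topology U) \<and> stone_spectrum \<subseteq> \<Union>\<U>"
  then have opens: "\<And>U. U \<in> \<U> \<Longrightarrow> openin stone_topology U" and cov: "stone_spectrum \<subseteq> \<Union>\<U>"
    by auto
  define A where "A = {a. \<exists>U\<in>\<U>. stone_clopen a \<subseteq> U}"
  have "stone_spectrum \<subseteq> (\<Union>a\<in>A. stone_clopen a)"
  proof
    fix B :: "'a set" assume B: "B \<in> stone_spectrum"
    with cov obtain U where U: "U \<in> \<U>" "B \<in> U" by auto
    with opens obtain a where a: "a \<in> B" "stone_clopen a \<subseteq> U"
      unfolding openin_stone_topology_iff by meson
    then have "a \<in> A" using U(1) unfolding A_def by auto
    with B a(1) show "B \<in> (\<Union>a\<in>A. stone_clopen a)" by auto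
  qed
  then obtain D where D: "finite D" "D \<subseteq> A" "stone_spectrum \<subseteq> (\<Union>a\<in>D. stone_clopen a)"
    by (auto dest: stone_clopen_cover_finite_subcover)
  have "\<forall>a\<in>D. \<exists>U. U \<in> \<U> \<and> stone_clopen a \<subseteq> U"
    using D(2) unfolding A_def by auto
  then obtain g where g: "\<forall>a\<in>D. g a \<in> \<U> \<and> stone_clopen a \<subseteq> g a"
    by (rule bchoice[elim_format]) auto
  have "stone_spectrum \<subseteq> \<Union>(g ` D)"
  proof
    fix B :: "'a set" assume "B \<in> stone_spectrum"
    with D(3) obtain a where "a \<in> D" "B \<in> stone_clopen a" by auto
    with g show "B \<in> \<Union>(g ` D)" by auto
  qed
  moreover have "g ` D \<subseteq> \<U>" using g by auto
  ultimately show "\<exists>\<F>. finite \<F> \<and> \<F> \<subseteq> \<U> \<and> stone_spectrum \<subseteq> \<Union>\<F>"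
    using D(1) by (intro exI[of _ "g ` D"]) auto
qed

lemma stone_clopen_UN_finite:
  "finite D \<Longrightarrow> \<exists>c. stone_clopen c = (\<Union>d\<in>D. stone_clopen d)"
proof (induction rule: finite_induct)
  case empty
  show ?case using stone_clopen_bot by auto
next
  case (insert x D)
  then obtain c where "stone_clopen c = (\<Union>d\<in>D. stone_clopen d)" by blast
  then show ?case using stone_clopen_sup[of x c] by auto
qed

lemma compactin_stone_clopen_between:
  assumes K: "compactin stone_topology K" and U: "openin stone_topology U" and "K \<subseteq> U"
  shows "\<exists>c. K \<subseteq> stone_clopen c \<and> stone_clopen c \<subseteq> U"
proof -
  have "K \<subseteq> \<Union>(stone_clopen ` {a. stone_clopen a \<subseteq> U})"
    using \<open>K \<subseteq> U\<close> U unfolding openin_stone_topology_iff by blast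
  then have "\<exists>W. finite W \<and> W \<subseteq> stone_clopen ` {a. stone_clopen a \<subseteq> U} \<and> K \<subseteq> \<Union>W"
    using openin_stone_clopen by (intro compactinD[OF K]) auto
  then obtain W where W: "finite W" "W \<subseteq> stone_clopen ` {a. stone_clopen a \<subseteq> U}" "K \<subseteq> \<Union>W"
    by blast
  obtain D where "D \<subseteq> {a. stone_clopen a \<subseteq> U}" "finite D" "W = stone_clopen ` D"
    using finite_subset_image[OF W(1,2)] by blast
  with W(3) have "finite D" "D \<subseteq> {a. stone_clopen a \<subseteq> U}" "K \<subseteq> (\<Union>d\<in>D. stone_clopen d)"
    by simp_all
  moreover obtain c where "stone_clopen c = (\<Union>d\<in>D. stone_clopen d)"
    using stone_clopen_UN_finite[OF \<open>finite D\<close>] by blast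
  ultimately show ?thesis by blast
qed

lemma continuous_map_stoneI:
  fixes f :: "'a::boolean_algebra set \<Rightarrow> 'b::metric_space"
  assumes "\<And>B e. B \<in> stone_spectrum \<Longrightarrow> e > 0 \<Longrightarrow>
    \<exists>a\<in>B. \<forall>B'\<in>stone_clopen a. dist (f B') (f B) < e"
  shows "continuous_map stone_topology euclidean f"
  unfolding continuous_map_def topspace_stone_topology
proof (intro conjI allI impI)
  fix V :: "'b set" assume "openin euclidean V"
  then have V: "open V" by simp
  show "openin stone_topology {B \<in> stone_spectrum. f B \<in> V}"
    unfolding openin_stone_topology_iff
  proof (intro conjI ballI)
    fix B assume B: "B \<in> {B \<in> stone_spectrum. f B \<in> V}"
    then obtain e where "e > 0" "ball (f B) e \<subseteq> V" using V open_contains_ball by blast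
    moreover obtain a where "a \<in> B" "\<forall>B'\<in>stone_clopen a. dist (f B') (f B) < e"
      using assms B \<open>e > 0\<close> by blast
    ultimately have "stone_clopen a \<subseteq> {B \<in> stone_spectrum. f B \<in> V}"
      by (auto simp: dist_commute)
    with \<open>a \<in> B\<close> show "\<exists>a\<in>B. stone_clopen a \<subseteq> {B \<in> stone_spectrum. f B \<in> V}" ..
  qed blast
qed simp

lemma continuous_map_stone_bounded:
  fixes f :: "'a::boolean_algebra set \<Rightarrow> 'b::real_normed_vector"
  assumes "continuous_map stone_topology euclidean f"
  shows "\<exists>M. \<forall>B\<in>stone_spectrum. norm (f B) \<le> M"
proof -
  have "compactin euclidean (f ` stone_spectrum)"
    using image_compactin[OF compact_space_stone_topology[unfolded compact_space_def] assms]
    by (simp add: topspace_stone_topology)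
  then have "bounded (f ` stone_spectrum)" by (simp add: compact_imp_bounded)
  then show ?thesis unfolding bounded_iff by blast
qed

section \<open>Sigma-completeness\<close>

lemma sigma_complete_lub:
  assumes "sigma_complete TYPE('a::boolean_algebra)" and "countable (S :: 'a set)"
  shows "\<exists>x. is_lub x S"
proof -
  obtain y where y: "is_glb y (uminus ` S)"
    using assms(1) countable_image[OF assms(2)] unfolding sigma_complete_def by blast
  have "is_lub (- y) S"
    unfolding is_lub_def
  proof (intro conjI ballI allI impI)
    fix s assume "s \<in> S"
    then show "s \<le> - y" using y unfolding is_glb_def by (blast intro: compl_le_swap1)
  next
    fix z assume "\<forall>s\<in>S. s \<le> z"
    then have "- z \<le> y" using y unfolding is_glb_def by auto
    then show "- y \<le> z" by (rule compl_le_swap2)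
  qed
  then show ?thesis by blast
qed

lemma sigma_complete_clopen_between:
  fixes U F :: "'a::boolean_algebra set set" and K :: "nat \<Rightarrow> 'a set set"
  assumes sc: "sigma_complete TYPE('a)"
    and U: "openin stone_topology U" and F: "closedin stone_topology F" and "U \<subseteq> F"
    and K: "\<And>n. closedin stone_topology (K n)" and U_eq: "U = (\<Union>n. K n)"
  shows "\<exists>s. (\<forall>a. stone_clopen a \<subseteq> U \<longrightarrow> a \<le> s) \<and> stone_clopen s \<subseteq> F"
proof -
  have "\<exists>c. K n \<subseteq> stone_clopen c \<and> stone_clopen c \<subseteq> U" for n
  proof (rule compactin_stone_clopen_between)
    show "compactin stone_topology (K n)"
      using closedin_compact_space[OF compact_space_stone_topology K] .
    show "K n \<subseteq> U" using U_eq by auto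
  qed (rule U)
  then obtain c where c: "\<And>n. K n \<subseteq> stone_clopen (c n)" "\<And>n. stone_clopen (c n) \<subseteq> U"
    by metis
  have "countable (range c)" by simp
  then obtain s where s: "is_lub s (range c)" using sigma_complete_lub[OF sc] by blast
  have "a \<le> s" if a: "stone_clopen a \<subseteq> U" for a
  proof -
    have "stone_clopen a \<subseteq> stone_clopen s"
    proof
      fix B assume "B \<in> stone_clopen a"
      with a U_eq c(1) obtain n where "B \<in> stone_clopen (c n)" by blast
      moreover have "c n \<le> s" using s unfolding is_lub_def by auto
      ultimately show "B \<in> stone_clopen s" using stone_spectrum_upward by auto
    qed
    then show ?thesis by (simp only: stone_clopen_subset_iff)
  qed
  moreover have "stone_clopen s \<subseteq> F"
  proof
    fix B assume B: "B \<in> stone_clopen s"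
    show "B \<in> F"
    proof (rule ccontr)
      assume "B \<notin> F"
      have "openin stone_topology (stone_spectrum - F)"
        using F by (simp add: closedin_def topspace_stone_topology)
      moreover have "B \<in> stone_spectrum - F" using B \<open>B \<notin> F\<close> by auto
      ultimately obtain d where d: "d \<in> B" "stone_clopen d \<subseteq> stone_spectrum - F"
        unfolding openin_stone_topology_iff by meson
      have "stone_clopen (c n) \<subseteq> stone_clopen (- d)" for n
        using c(2)[of n] \<open>U \<subseteq> F\<close> d(2) unfolding stone_clopen_compl by auto
      then have "c n \<le> - d" for n by (simp only: stone_clopen_subset_iff)
      then have "s \<le> - d" using s unfolding is_lub_def by auto
      then have "- d \<in> B" using B stone_spectrum_upward by auto
      with B d(1) show False using stone_spectrum_compl_iff by auto
    qed
  qed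
  ultimately show ?thesis by auto
qed

section \<open>From bounded spectral families to continuous functions\<close>

lemma csf_inf:
  "complex_spectral_family E \<Longrightarrow> inf (E l1 l2) (E m1 m2) = E (min l1 m1) (min l2 m2)"
  unfolding complex_spectral_family_def by blast

lemma csf_mono:
  assumes "complex_spectral_family E" "l1 \<le> m1" "l2 \<le> m2"
  shows "E l1 l2 \<le> E m1 m2"
  using csf_inf[OF assms(1), of l1 l2 m1 m2] assms(2,3) by (simp add: inf.orderI min_absorb1)

lemma S_b_csf: "E \<in> S_b \<Longrightarrow> complex_spectral_family E"
  unfolding S_b_def bounded_csf_def by blast

definition spectral_value :: "(real \<Rightarrow> real \<Rightarrow> 'a::boolean_algebra) \<Rightarrow> 'a set \<Rightarrow> complex \<Rightarrow> bool" where
  "spectral_value E B z \<longleftrightarrow>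
     (\<forall>l1 l2. E l1 l2 \<in> B \<longrightarrow> Re z \<le> l1 \<and> Im z \<le> l2) \<and>
     (\<forall>l1 l2. Re z < l1 \<and> Im z < l2 \<longrightarrow> E l1 l2 \<in> B)"

lemma spectral_value_unique:
  assumes z: "spectral_value E B z" and w: "spectral_value E B w"
  shows "z = w"
proof -
  have le: "Re v \<le> Re u \<and> Im v \<le> Im u" if "spectral_value E B u" "spectral_value E B v" for u v
  proof -
    have *: "Re v \<le> l1 \<and> Im v \<le> l2" if "Re u < l1" "Im u < l2" for l1 l2
      using \<open>spectral_value E B u\<close> \<open>spectral_value E B v\<close> that unfolding spectral_value_def by blast
    have "Re v \<le> Re u" by (rule dense_ge) (use *[of _ "Im u + 1"] in auto)
    moreover have "Im v \<le> Im u" by (rule dense_ge) (use *[of "Re u + 1"] in auto)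
    ultimately show ?thesis ..
  qed
  show ?thesis using le[OF z w] le[OF w z] by (simp add: complex_eq_iff)
qed

lemma spectral_value_f_E:
  assumes E: "E \<in> S_b" and B: "B \<in> stone_spectrum"
  shows "spectral_value E B (f_E E B)"
proof -
  have csf: "complex_spectral_family E" using E by (rule S_b_csf)
  obtain m b where bot: "\<And>l1 l2. l1 \<le> m \<or> l2 \<le> m \<Longrightarrow> E l1 l2 = bot"
    and top: "E b b = top"
    using E unfolding S_b_def bounded_csf_def by blast
  define S1 where "S1 = {l. \<exists>m. E l m \<in> B}"
  define S2 where "S2 = {m. \<exists>l. E l m \<in> B}"
  have above_m: "m < l1 \<and> m < l2" if "E l1 l2 \<in> B" for l1 l2
  proof (rule ccontr)
    assume "\<not> ?thesis"
    then have "E l1 l2 = bot" using bot by (simp add: not_less)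
    with that show False using stone_spectrum_bot[OF B] by simp
  qed
  have "E b b \<in> B" using top stone_spectrum_top[OF B] by simp
  then have ne: "S1 \<noteq> {}" "S2 \<noteq> {}" unfolding S1_def S2_def by blast+
  have "bdd_below S1"
  proof (rule bdd_belowI)
    fix l assume "l \<in> S1"
    then obtain l' where "E l l' \<in> B" unfolding S1_def by blast
    then show "m \<le> l" using above_m by fastforce
  qed
  moreover have "bdd_below S2"
  proof (rule bdd_belowI)
    fix l assume "l \<in> S2"
    then obtain l' where "E l' l \<in> B" unfolding S2_def by blast
    then show "m \<le> l" using above_m by fastforce
  qed
  ultimately have "Inf S1 \<le> l1 \<and> Inf S2 \<le> l2" if "E l1 l2 \<in> B" for l1 l2
    using that by (auto intro!: cInf_lower simp: S1_def S2_def)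
  moreover have "E l1 l2 \<in> B" if lt: "Inf S1 < l1" "Inf S2 < l2" for l1 l2
  proof -
    obtain x where "x \<in> S1" "x < l1" using cInf_lessD[OF ne(1) lt(1)] by blast
    then obtain p where x: "x < l1" "E x p \<in> B" unfolding S1_def by blast
    obtain y where "y \<in> S2" "y < l2" using cInf_lessD[OF ne(2) lt(2)] by blast
    then obtain q where y: "y < l2" "E q y \<in> B" unfolding S2_def by blast
    define K where "K = max (max p q) (max l1 l2)"
    have "E x p \<le> E l1 K" "E q y \<le> E K l2"
      using x(1) y(1) by (auto intro!: csf_mono[OF csf] simp: K_def)
    then have "E l1 K \<in> B" "E K l2 \<in> B"
      using stone_spectrum_upward[OF B] x(2) y(2) by blast+
    then have "inf (E l1 K) (E K l2) \<in> B" using stone_spectrum_inf_iff[OF B] by blast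
    also have "inf (E l1 K) (E K l2) = E l1 l2"
      using csf_inf[OF csf] by (simp add: K_def)
    finally show ?thesis .
  qed
  moreover have "Re (f_E E B) = Inf S1" "Im (f_E E B) = Inf S2"
    using B by (simp_all add: f_E_def f_E1_def f_E2_def S1_def S2_def)
  ultimately show ?thesis unfolding spectral_value_def by auto
qed

lemma continuous_map_f_E:
  assumes E: "E \<in> S_b"
  shows "continuous_map stone_topology euclidean (f_E E)"
proof (rule continuous_map_stoneI)
  obtain b where top: "E b b = top"
    using E unfolding S_b_def bounded_csf_def by blast
  have val: "spectral_value E B (f_E E B)" if "B \<in> stone_spectrum" for B
    using spectral_value_f_E[OF E that] .
  define K where "K = b + 1"
  have below_K: "Re (f_E E B) < K \<and> Im (f_E E B) < K" if "B \<in> stone_spectrum" for B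
  proof -
    have "E b b \<in> B" using top stone_spectrum_top[OF that] by simp
    then show ?thesis using val[OF that] unfolding spectral_value_def K_def by force
  qed
  fix B0 :: "'a set" and e :: real
  assume B0: "B0 \<in> stone_spectrum" and "e > 0"
  define x y d where "x = Re (f_E E B0)" and "y = Im (f_E E B0)" and "d = e / 4"
  have "d > 0" using \<open>e > 0\<close> by (simp add: d_def)
  \<comment> \<open>Q_a contains B0, and f_E E maps it into the closed square of half-width d around f_E E B0.\<close>
  define a where "a = inf (E (x + d) (y + d)) (inf (- E (x - d) K) (- E K (y - d)))"
  have "E (x + d) (y + d) \<in> B0" "E (x - d) K \<notin> B0" "E K (y - d) \<notin> B0"
    using val[OF B0] \<open>d > 0\<close> unfolding spectral_value_def x_def y_def by force+
  then have "a \<in> B0" using B0 by (simp add: a_def stone_spectrum_inf_iff stone_spectrum_compl_iff)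
  moreover have "dist (f_E E B) (f_E E B0) < e" if B: "B \<in> stone_clopen a" for B
  proof -
    let ?z = "f_E E B"
    from B have B_spec: "B \<in> stone_spectrum" and "a \<in> B" by auto
    then have "E (x + d) (y + d) \<in> B" "E (x - d) K \<notin> B" "E K (y - d) \<notin> B"
      by (simp_all add: a_def stone_spectrum_inf_iff stone_spectrum_compl_iff)
    moreover have up: "Re ?z \<le> l1 \<and> Im ?z \<le> l2" if "E l1 l2 \<in> B" for l1 l2
      using val[OF B_spec] that unfolding spectral_value_def by blast
    moreover have low: "E l1 l2 \<in> B" if "Re ?z < l1" "Im ?z < l2" for l1 l2
      using val[OF B_spec] that unfolding spectral_value_def by blast
    ultimately have "Re ?z \<le> x + d" "Im ?z \<le> y + d" "x - d \<le> Re ?z" "y - d \<le> Im ?z"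
      using below_K[OF B_spec] by (meson not_le)+
    then have "\<bar>Re ?z - x\<bar> \<le> d" "\<bar>Im ?z - y\<bar> \<le> d" by auto
    then have "cmod (?z - f_E E B0) \<le> 2 * d"
      using cmod_le[of "?z - f_E E B0"] by (simp add: x_def y_def)
    then show ?thesis using \<open>d > 0\<close> by (simp add: dist_norm d_def)
  qed
  ultimately show "\<exists>a\<in>B0. \<forall>B\<in>stone_clopen a. dist (f_E E B) (f_E E B0) < e" by blast
qed

lemma f_E_in_C_Q: "E \<in> S_b \<Longrightarrow> f_E E \<in> C_Q"
  unfolding C_Q_def using continuous_map_f_E by (simp add: f_E_def)

lemma csf_le_of_common_spectral_values:
  assumes F: "complex_spectral_family F"
    and common: "\<And>B. B \<in> stone_spectrum \<Longrightarrow> \<exists>z. spectral_value E B z \<and> spectral_value F B z"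
  shows "E l1 l2 \<le> F l1 l2"
proof -
  have le: "E l1 l2 \<le> F m1 m2" if "l1 < m1" "l2 < m2" for m1 m2
  proof (subst stone_clopen_subset_iff[symmetric], rule subsetI)
    fix B assume B: "B \<in> stone_clopen (E l1 l2)"
    then obtain z where z: "spectral_value E B z" "spectral_value F B z" using common by auto
    from z(1) B have "Re z \<le> l1" "Im z \<le> l2" unfolding spectral_value_def by blast+
    with that have "Re z < m1 \<and> Im z < m2" by auto
    with z(2) have "F m1 m2 \<in> B" unfolding spectral_value_def by blast
    with B show "B \<in> stone_clopen (F m1 m2)" by auto
  qed
  then have "\<forall>s\<in>{F m1 m2 | m1 m2. m1 \<in> \<rat> \<and> m2 \<in> \<rat> \<and> l1 < m1 \<and> l2 < m2}. E l1 l2 \<le> s"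
    by auto
  moreover have "is_glb (F l1 l2) {F m1 m2 | m1 m2. m1 \<in> \<rat> \<and> m2 \<in> \<rat> \<and> l1 < m1 \<and> l2 < m2}"
    using F unfolding complex_spectral_family_def by blast
  ultimately show ?thesis unfolding is_glb_def by blast
qed

lemma inj_on_f_E: "inj_on f_E S_b"
proof (rule inj_onI)
  fix E F assume E: "E \<in> S_b" and F: "F \<in> S_b" and eq: "f_E E = f_E F"
  have common: "spectral_value E B (f_E E B) \<and> spectral_value F B (f_E E B)"
    if "B \<in> stone_spectrum" for B
    using spectral_value_f_E[OF E that] spectral_value_f_E[OF F that] eq by simp
  have "E l1 l2 \<le> F l1 l2" "F l1 l2 \<le> E l1 l2" for l1 l2
    using csf_le_of_common_spectral_values[OF S_b_csf[OF F]]
      csf_le_of_common_spectral_values[OF S_b_csf[OF E]] common by blast+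
  then show "E = F" by (blast intro: ext antisym)
qed

section \<open>From continuous functions to bounded spectral families\<close>

definition interior_element :: "'a::boolean_algebra set set \<Rightarrow> 'a \<Rightarrow> bool" where
  "interior_element S e \<longleftrightarrow> (\<forall>a. a \<le> e \<longleftrightarrow> stone_clopen a \<subseteq> S)"

lemma interior_element_unique: "interior_element S e \<Longrightarrow> interior_element S e' \<Longrightarrow> e = e'"
  unfolding interior_element_def by (metis order.antisym order.refl)

lemma interior_element_stone_clopen: "interior_element (stone_clopen e) e"
  unfolding interior_element_def by (simp add: stone_clopen_subset_iff)

lemma interior_element_Int:
  "interior_element S e \<Longrightarrow> interior_element T e' \<Longrightarrow> interior_element (S \<inter> T) (inf e e')"
  unfolding interior_element_def by simp

lemma interior_element_INT_is_glb:
  assumes "interior_element (\<Inter>i\<in>I. S i) e" and "\<And>i. i \<in> I \<Longrightarrow> interior_element (S i) (x i)"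
  shows "is_glb e (x ` I)"
proof -
  have e: "a \<le> e \<longleftrightarrow> stone_clopen a \<subseteq> (\<Inter>i\<in>I. S i)" for a
    using assms(1) unfolding interior_element_def by simp
  have x: "a \<le> x i \<longleftrightarrow> stone_clopen a \<subseteq> S i" if "i \<in> I" for a i
    using assms(2)[OF that] unfolding interior_element_def by simp
  have glb: "a \<le> e \<longleftrightarrow> (\<forall>i\<in>I. a \<le> x i)" for a
    unfolding e by (auto simp: x)
  have "e \<le> x i" if "i \<in> I" for i using glb[of e] that by simp
  then show ?thesis unfolding is_glb_def by (auto simp: glb)
qed

definition sublevel :: "('a::boolean_algebra set \<Rightarrow> complex) \<Rightarrow> real \<Rightarrow> real \<Rightarrow> 'a set set" where
  "sublevel f l1 l2 = {B \<in> stone_spectrum. Re (f B) \<le> l1 \<and> Im (f B) \<le> l2}"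

definition strict_sublevel :: "('a::boolean_algebra set \<Rightarrow> complex) \<Rightarrow> real \<Rightarrow> real \<Rightarrow> 'a set set" where
  "strict_sublevel f l1 l2 = {B \<in> stone_spectrum. Re (f B) < l1 \<and> Im (f B) < l2}"

lemma closedin_sublevel:
  assumes "continuous_map stone_topology euclidean f"
  shows "closedin stone_topology (sublevel f l1 l2)"
proof -
  have "closed {z. Re z \<le> l1 \<and> Im z \<le> l2}"
    by (intro closed_Collect_conj closed_Collect_le continuous_intros)
  then show ?thesis
    using closedin_continuous_map_preimage[OF assms, of "{z. Re z \<le> l1 \<and> Im z \<le> l2}"]
    by (simp add: sublevel_def topspace_stone_topology)
qed

lemma openin_strict_sublevel:
  assumes "continuous_map stone_topology euclidean f"
  shows "openin stone_topology (strict_sublevel f l1 l2)"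
proof -
  have "open {z. Re z < l1 \<and> Im z < l2}"
    by (intro open_Collect_conj open_Collect_less continuous_intros)
  then show ?thesis
    using openin_continuous_map_preimage[OF assms, of "{z. Re z < l1 \<and> Im z < l2}"]
    by (simp add: strict_sublevel_def topspace_stone_topology)
qed

lemma strict_sublevel_subset_sublevel: "strict_sublevel f l1 l2 \<subseteq> sublevel f l1 l2"
  unfolding strict_sublevel_def sublevel_def by auto

lemma sublevel_subset_strict_sublevel:
  "l1 < m1 \<Longrightarrow> l2 < m2 \<Longrightarrow> sublevel f l1 l2 \<subseteq> strict_sublevel f m1 m2"
  unfolding strict_sublevel_def sublevel_def by auto

lemma sublevel_Int:
  "sublevel f l1 l2 \<inter> sublevel f m1 m2 = sublevel f (min l1 m1) (min l2 m2)"
  unfolding sublevel_def by auto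

lemma strict_sublevel_eq_UN:
  "strict_sublevel f m1 m2 =
     (\<Union>n. sublevel f (m1 - inverse (Suc n)) (m2 - inverse (Suc n)))"
proof (intro equalityI subsetI)
  fix B assume "B \<in> strict_sublevel f m1 m2"
  then have "B \<in> stone_spectrum" "0 < min (m1 - Re (f B)) (m2 - Im (f B))"
    by (auto simp: strict_sublevel_def)
  moreover obtain n where "inverse (Suc n) < min (m1 - Re (f B)) (m2 - Im (f B))"
    using reals_Archimedean calculation(2) by blast
  ultimately have "B \<in> sublevel f (m1 - inverse (Suc n)) (m2 - inverse (Suc n))"
    by (auto simp: sublevel_def)
  then show "B \<in> (\<Union>n. sublevel f (m1 - inverse (Suc n)) (m2 - inverse (Suc n)))" by blast
next
  fix B assume "B \<in> (\<Union>n. sublevel f (m1 - inverse (Suc n)) (m2 - inverse (Suc n)))"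
  then obtain n where B: "B \<in> stone_spectrum"
    "Re (f B) \<le> m1 - inverse (Suc n)" "Im (f B) \<le> m2 - inverse (Suc n)"
    unfolding sublevel_def by blast
  have "0 < inverse (real (Suc n))" by simp
  with B(2,3) have "Re (f B) < m1" "Im (f B) < m2" by linarith+
  with B(1) show "B \<in> strict_sublevel f m1 m2" unfolding strict_sublevel_def by blast
qed

lemma le_of_le_Rats_above:
  fixes x l :: real
  assumes "\<And>m. m \<in> \<rat> \<Longrightarrow> l < m \<Longrightarrow> x \<le> m"
  shows "x \<le> l"
proof (rule ccontr)
  assume "\<not> x \<le> l"
  then obtain r where "r \<in> \<rat>" "l < r" "r < x" using Rats_dense_in_real[of l x] by auto
  then show False using assms by force
qed

lemma Rats_above: "\<exists>r\<in>\<rat>. (x::real) < r"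
  using Rats_dense_in_real[of x "x + 1"] by auto

lemma sublevel_eq_INT_Rats:
  "sublevel f l1 l2 =
     (\<Inter>(m1, m2)\<in>{(m1, m2). m1 \<in> \<rat> \<and> m2 \<in> \<rat> \<and> l1 < m1 \<and> l2 < m2}. sublevel f m1 m2)"
proof (intro equalityI subsetI)
  fix B assume "B \<in> sublevel f l1 l2"
  then show "B \<in> (\<Inter>(m1, m2)\<in>{(m1, m2). m1 \<in> \<rat> \<and> m2 \<in> \<rat> \<and> l1 < m1 \<and> l2 < m2}. sublevel f m1 m2)"
    by (auto simp: sublevel_def)
next
  fix B assume B: "B \<in> (\<Inter>(m1, m2)\<in>{(m1, m2). m1 \<in> \<rat> \<and> m2 \<in> \<rat> \<and> l1 < m1 \<and> l2 < m2}. sublevel f m1 m2)"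
  obtain r1 r2 where r: "r1 \<in> \<rat>" "l1 < r1" "r2 \<in> \<rat>" "l2 < r2" using Rats_above by meson
  have "Re (f B) \<le> l1"
    by (rule le_of_le_Rats_above) (use B r in \<open>auto simp: sublevel_def\<close>)
  moreover have "Im (f B) \<le> l2"
    by (rule le_of_le_Rats_above) (use B r in \<open>auto simp: sublevel_def\<close>)
  moreover have "B \<in> stone_spectrum" using B r by (auto simp: sublevel_def)
  ultimately show "B \<in> sublevel f l1 l2" by (simp add: sublevel_def)
qed

lemma sigma_complete_interior_element_sublevel:
  assumes sc: "sigma_complete TYPE('a::boolean_algebra)"
    and f: "continuous_map stone_topology euclidean (f :: 'a set \<Rightarrow> complex)"
  shows "\<exists>e. interior_element (sublevel f l1 l2) e"
proof -
  have "\<exists>s. (\<forall>a. stone_clopen a \<subseteq> strict_sublevel f m1 m2 \<longrightarrow> a \<le> s) \<and>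
            stone_clopen s \<subseteq> sublevel f m1 m2" for m1 m2
    using sigma_complete_clopen_between[OF sc openin_strict_sublevel[OF f] closedin_sublevel[OF f]
        strict_sublevel_subset_sublevel closedin_sublevel[OF f] strict_sublevel_eq_UN] .
  then obtain s where s_upper: "\<And>m1 m2 a. stone_clopen a \<subseteq> strict_sublevel f m1 m2 \<Longrightarrow> a \<le> s m1 m2"
    and s_sub: "\<And>m1 m2. stone_clopen (s m1 m2) \<subseteq> sublevel f m1 m2"
    by metis
  define I where "I = {(m1, m2). m1 \<in> \<rat> \<and> m2 \<in> \<rat> \<and> l1 < m1 \<and> l2 < m2}"
  have "countable I"
    unfolding I_def by (rule countable_subset[of _ "\<rat> \<times> \<rat>"]) (auto simp: countable_rat)
  then have "countable (case_prod s ` I)" by (rule countable_image)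
  then obtain e where e: "is_glb e (case_prod s ` I)"
    using sc unfolding sigma_complete_def by blast
  have e_lower: "e \<le> s m1 m2" if "(m1, m2) \<in> I" for m1 m2
    using e that unfolding is_glb_def by force
  have e_greatest: "a \<le> e" if "\<And>m1 m2. (m1, m2) \<in> I \<Longrightarrow> a \<le> s m1 m2" for a
  proof -
    have "\<forall>t\<in>case_prod s ` I. a \<le> t" using that by force
    then show ?thesis using e unfolding is_glb_def by blast
  qed
  have "interior_element (sublevel f l1 l2) e"
    unfolding interior_element_def
  proof (intro allI iffI)
    fix a assume "a \<le> e"
    have "stone_clopen a \<subseteq> sublevel f m1 m2" if "(m1, m2) \<in> I" for m1 m2
    proof -
      have "a \<le> s m1 m2" using \<open>a \<le> e\<close> e_lower[OF that] by (rule order_trans)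
      then have "stone_clopen a \<subseteq> stone_clopen (s m1 m2)" by (simp only: stone_clopen_subset_iff)
      then show ?thesis using s_sub[of m1 m2] by (rule subset_trans)
    qed
    then show "stone_clopen a \<subseteq> sublevel f l1 l2"
      by (subst sublevel_eq_INT_Rats) (fastforce simp: I_def)
  next
    fix a assume a: "stone_clopen a \<subseteq> sublevel f l1 l2"
    show "a \<le> e"
    proof (rule e_greatest)
      fix m1 m2 assume "(m1, m2) \<in> I"
      then have "sublevel f l1 l2 \<subseteq> strict_sublevel f m1 m2"
        unfolding I_def by (simp add: sublevel_subset_strict_sublevel)
      with a show "a \<le> s m1 m2" by (intro s_upper) (rule subset_trans)
    qed
  qed
  then show ?thesis ..
qed

definition spectral_family_of :: "('a::boolean_algebra set \<Rightarrow> complex) \<Rightarrow> real \<Rightarrow> real \<Rightarrow> 'a" where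
  "spectral_family_of f l1 l2 = (THE e. interior_element (sublevel f l1 l2) e)"

lemma spectral_family_of_eqI:
  "interior_element (sublevel f l1 l2) e \<Longrightarrow> spectral_family_of f l1 l2 = e"
  unfolding spectral_family_of_def by (blast intro: the_equality interior_element_unique)

lemma interior_element_spectral_family_of:
  assumes "sigma_complete TYPE('a::boolean_algebra)"
    and "continuous_map stone_topology euclidean (f :: 'a set \<Rightarrow> complex)"
  shows "interior_element (sublevel f l1 l2) (spectral_family_of f l1 l2)"
  using sigma_complete_interior_element_sublevel[OF assms] spectral_family_of_eqI by metis

lemma spectral_family_of_eq_bot:
  assumes M: "\<forall>B\<in>stone_spectrum. cmod (f B) \<le> M" and "l1 < - M \<or> l2 < - M"
  shows "spectral_family_of f l1 l2 = bot"
proof (rule spectral_family_of_eqI)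
  have "\<bar>Re (f B)\<bar> \<le> M" "\<bar>Im (f B)\<bar> \<le> M" if "B \<in> stone_spectrum" for B
    using M that abs_Re_le_cmod[of "f B"] abs_Im_le_cmod[of "f B"] by auto
  then have "sublevel f l1 l2 = {}"
    using assms(2) unfolding sublevel_def by (fastforce simp: abs_le_iff)
  then show "interior_element (sublevel f l1 l2) bot"
    using interior_element_stone_clopen[of bot] by (simp add: stone_clopen_bot)
qed

lemma spectral_family_of_eq_top:
  assumes M: "\<forall>B\<in>stone_spectrum. cmod (f B) \<le> M" and "M \<le> l1" "M \<le> l2"
  shows "spectral_family_of f l1 l2 = top"
proof (rule spectral_family_of_eqI)
  have "\<bar>Re (f B)\<bar> \<le> M" "\<bar>Im (f B)\<bar> \<le> M" if "B \<in> stone_spectrum" for B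
    using M that abs_Re_le_cmod[of "f B"] abs_Im_le_cmod[of "f B"] by auto
  then have "sublevel f l1 l2 = stone_spectrum"
    using assms(2,3) unfolding sublevel_def by (fastforce simp: abs_le_iff)
  then show "interior_element (sublevel f l1 l2) top"
    using interior_element_stone_clopen[of top] by (simp add: stone_clopen_top)
qed

lemma is_glb_bot: "bot \<in> S \<Longrightarrow> is_glb bot S"
  unfolding is_glb_def by auto

lemma is_lub_top: "top \<in> S \<Longrightarrow> is_lub top S"
  unfolding is_lub_def by auto

lemma complex_spectral_family_spectral_family_of:
  assumes sc: "sigma_complete TYPE('a::boolean_algebra)"
    and f: "continuous_map stone_topology euclidean (f :: 'a set \<Rightarrow> complex)"
  shows "complex_spectral_family (spectral_family_of f)"
proof -
  let ?E = "spectral_family_of f"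
  have int: "interior_element (sublevel f l1 l2) (?E l1 l2)" for l1 l2
    using interior_element_spectral_family_of[OF sc f] .
  obtain M where M: "\<forall>B\<in>stone_spectrum. cmod (f B) \<le> M"
    using continuous_map_stone_bounded[OF f] by blast
  obtain r where r: "r \<in> \<rat>" "r < - M" using Rats_dense_in_real[of "- M - 1" "- M"] by auto
  obtain t where t: "t \<in> \<rat>" "M < t" using Rats_above by blast
  show ?thesis
    unfolding complex_spectral_family_def
  proof (intro conjI allI)
    fix l1 l2 m1 m2 :: real
    show "inf (?E l1 l2) (?E m1 m2) = ?E (min l1 m1) (min l2 m2)"
      using interior_element_Int[OF int int] int unfolding sublevel_Int by (rule interior_element_unique)
  next
    fix l1 l2 :: real
    let ?I = "{(m1, m2). m1 \<in> \<rat> \<and> m2 \<in> \<rat> \<and> l1 < m1 \<and> l2 < m2}"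
    have "interior_element (\<Inter>(m1, m2)\<in>?I. sublevel f m1 m2) (?E l1 l2)"
      using int[of l1 l2] unfolding sublevel_eq_INT_Rats[of f l1 l2] .
    then have "is_glb (?E l1 l2) (case_prod ?E ` ?I)"
      by (rule interior_element_INT_is_glb) (auto simp: int)
    moreover have "case_prod ?E ` ?I = {?E m1 m2 | m1 m2. m1 \<in> \<rat> \<and> m2 \<in> \<rat> \<and> l1 < m1 \<and> l2 < m2}"
      by auto
    ultimately show "is_glb (?E l1 l2) {?E m1 m2 | m1 m2. m1 \<in> \<rat> \<and> m2 \<in> \<rat> \<and> l1 < m1 \<and> l2 < m2}"
      by simp
  next
    fix l2 :: real
    have "?E r l2 = bot" using spectral_family_of_eq_bot[OF M] r(2) by blast
    with r(1) show "is_glb bot {?E l l2 | l. l \<in> \<rat>}"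
      by (intro is_glb_bot CollectI exI[of _ r]) simp
  next
    fix l1 :: real
    have "?E l1 r = bot" using spectral_family_of_eq_bot[OF M] r(2) by blast
    with r(1) show "is_glb bot {?E l1 l | l. l \<in> \<rat>}"
      by (intro is_glb_bot CollectI exI[of _ r]) simp
  next
    have "?E t t = top" using spectral_family_of_eq_top[OF M] t(2) by simp
    with t(1) show "is_lub top {?E l1 l2 | l1 l2. l1 \<in> \<rat> \<and> l2 \<in> \<rat>}"
      by (intro is_lub_top CollectI exI[of _ t]) simp
  qed
qed

lemma spectral_family_of_in_S_b:
  assumes sc: "sigma_complete TYPE('a::boolean_algebra)"
    and f: "continuous_map stone_topology euclidean (f :: 'a set \<Rightarrow> complex)"
  shows "spectral_family_of f \<in> S_b"
proof -
  let ?E = "spectral_family_of f"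
  obtain M where M: "\<forall>B\<in>stone_spectrum. cmod (f B) \<le> M"
    using continuous_map_stone_bounded[OF f] by blast
  have "\<forall>l1 l2. l1 \<le> - M - 1 \<or> l2 \<le> - M - 1 \<longrightarrow> ?E l1 l2 = bot"
    using spectral_family_of_eq_bot[OF M] by force
  moreover have "\<forall>l1 l2. M \<le> l1 \<and> M \<le> l2 \<longrightarrow> ?E l1 l2 = top"
    using spectral_family_of_eq_top[OF M] by blast
  ultimately show ?thesis
    using complex_spectral_family_spectral_family_of[OF sc f] unfolding S_b_def bounded_csf_def by blast
qed

lemma spectral_value_spectral_family_of:
  assumes sc: "sigma_complete TYPE('a::boolean_algebra)"
    and f: "continuous_map stone_topology euclidean (f :: 'a set \<Rightarrow> complex)"
    and B: "B \<in> stone_spectrum"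
  shows "spectral_value (spectral_family_of f) B (f B)"
proof -
  let ?E = "spectral_family_of f"
  have int: "\<And>a. a \<le> ?E l1 l2 \<longleftrightarrow> stone_clopen a \<subseteq> sublevel f l1 l2" for l1 l2
    using interior_element_spectral_family_of[OF sc f] unfolding interior_element_def by blast
  have "Re (f B) \<le> l1 \<and> Im (f B) \<le> l2" if "?E l1 l2 \<in> B" for l1 l2
  proof -
    have "B \<in> stone_clopen (?E l1 l2)" using B that by simp
    also have "\<dots> \<subseteq> sublevel f l1 l2" using int order_refl by blast
    finally show ?thesis by (simp add: sublevel_def)
  qed
  moreover have "?E l1 l2 \<in> B" if "Re (f B) < l1 \<and> Im (f B) < l2" for l1 l2
  proof -
    have "B \<in> strict_sublevel f l1 l2" using B that by (simp add: strict_sublevel_def)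
    then obtain a where "a \<in> B" "stone_clopen a \<subseteq> strict_sublevel f l1 l2"
      using openin_strict_sublevel[OF f] unfolding openin_stone_topology_iff by blast
    then have "a \<le> ?E l1 l2"
      using int strict_sublevel_subset_sublevel by blast
    then show ?thesis using \<open>a \<in> B\<close> B stone_spectrum_upward by blast
  qed
  ultimately show ?thesis unfolding spectral_value_def by blast
qed

lemma C_Q_subset_image_f_E:
  assumes sc: "sigma_complete TYPE('a::boolean_algebra)"
  shows "C_Q \<subseteq> f_E ` (S_b :: (real \<Rightarrow> real \<Rightarrow> 'a) set)"
proof
  fix f :: "'a set \<Rightarrow> complex" assume "f \<in> C_Q"
  then have f: "continuous_map stone_topology euclidean f"
    and zero: "\<And>B. B \<notin> stone_spectrum \<Longrightarrow> f B = 0"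
    unfolding C_Q_def by auto
  let ?E = "spectral_family_of f"
  have E: "?E \<in> S_b" using spectral_family_of_in_S_b[OF sc f] .
  have "f_E ?E B = f B" for B
  proof (cases "B \<in> stone_spectrum")
    case True
    then show ?thesis
      using spectral_value_unique spectral_value_f_E[OF E] spectral_value_spectral_family_of[OF sc f]
      by blast
  qed (simp add: f_E_def zero)
  then show "f \<in> f_E ` S_b" using E by (metis ext image_eqI)
qed

theorem theorem2p23:
  assumes "sigma_complete TYPE('a::boolean_algebra)"
  shows "bij_betw (f_E :: (real \<Rightarrow> real \<Rightarrow> 'a) \<Rightarrow> 'a set \<Rightarrow> complex) S_b C_Q"
  unfolding bij_betw_def
  using inj_on_f_E f_E_in_C_Q C_Q_subset_image_f_E[OF assms] by blast

end
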